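(* Let $K\subseteq\mathbb{R}^d$ be compact, let $f\in C^1(K)$ and let $df:K\to\mathbb{R}^d$ be a continuous derivative of $f$ on $K$. Then for every rectifiable path $\gamma:[a,b]\to K$, $$\int_\gamma df=f(\gamma(b))-f(\gamma(a)).$$
   Context: A function $df:K\to\mathbb{R}^d$ (identifying linear functionals on $\mathbb{R}^d$ with vectors via the scalar product $\langle\cdot,\cdot\rangle$) is a derivative of $f:K\to\mathbb{R}$ on $K$ if for every $x\in K$, $\lim_{y\to x,\,y\in K\setminus\{x\}}\frac{f(y)-f(x)-\langle df(x),y-x\rangle}{|y-x|}=0$. $C^1(K)$ is the set of $f:K\to\mathbb{R}$ admitting a continuous derivative on $K$. A path $\gamma:[a,b]\to K$ is a continuous map; its length is $L(\gamma)=\sup\{\sum_{j=1}^n|\gamma(t_j)-\gamma(t_{j-1})|: a=t_0<\dots<t_n=b\}$, and $\gamma$ is rectifiable if $L(\gamma)<\infty$. For continuous $F:K\to\mathbb{R}^d$ and rectifiable $\gamma$, the path integral $\int_\gamma F$ is the limit of the Riemann–Stieltjes sums $\sum_{j=1}^n\langle F(\gamma(\tau_j)),\gamma(t_j)-\gamma(t_{j-1})\rangle$ over partitions $a=t_0<\dots<t_n=b$ with mesh tending to $0$ and $t_{j-1}\le\tau_j\le t_j$. *)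

theory Defs
  imports "HOL-Analysis.Analysis"
begin

text \<open>df is a derivative of f on K (linear functionals identified with vectors via the inner product).\<close>
definition is_derivative_on ::
  "('a::euclidean_space \<Rightarrow> real) \<Rightarrow> ('a \<Rightarrow> 'a) \<Rightarrow> 'a set \<Rightarrow> bool" where
  "is_derivative_on f df K \<longleftrightarrow>
     (\<forall>x\<in>K. ((\<lambda>y. (f y - f x - df x \<bullet> (y - x)) / norm (y - x)) \<longlongrightarrow> 0)
               (at x within (K - {x})))"

definition is_partition :: "real \<Rightarrow> real \<Rightarrow> nat \<Rightarrow> (nat \<Rightarrow> real) \<Rightarrow> bool" where
  "is_partition a b n t \<longleftrightarrow> t 0 = a \<and> t n = b \<and> (\<forall>j<n. t j < t (Suc j))"

definition polygonal_sums :: "(real \<Rightarrow> 'a::euclidean_space) \<Rightarrow> real \<Rightarrow> real \<Rightarrow> real set" where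
  "polygonal_sums \<gamma> a b =
     {\<Sum>j\<in>{1..n}. norm (\<gamma> (t j) - \<gamma> (t (j - 1))) | n t. is_partition a b n t}"

definition path_len :: "(real \<Rightarrow> 'a::euclidean_space) \<Rightarrow> real \<Rightarrow> real \<Rightarrow> real" where
  "path_len \<gamma> a b = Sup (polygonal_sums \<gamma> a b)"

definition rectifiable :: "(real \<Rightarrow> 'a::euclidean_space) \<Rightarrow> real \<Rightarrow> real \<Rightarrow> bool" where
  "rectifiable \<gamma> a b \<longleftrightarrow> bdd_above (polygonal_sums \<gamma> a b)"

definition has_RS_path_integral ::
  "('a::euclidean_space \<Rightarrow> 'a) \<Rightarrow> (real \<Rightarrow> 'a) \<Rightarrow> real \<Rightarrow> real \<Rightarrow> real \<Rightarrow> bool" where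
  "has_RS_path_integral F \<gamma> a b I \<longleftrightarrow>
     (\<forall>\<epsilon>>0. \<exists>\<delta>>0. \<forall>n t \<tau>.
        is_partition a b n t \<and> (\<forall>j\<in>{1..n}. t j - t (j - 1) < \<delta>) \<and>
        (\<forall>j\<in>{1..n}. t (j - 1) \<le> \<tau> j \<and> \<tau> j \<le> t j)
        \<longrightarrow> \<bar>(\<Sum>j\<in>{1..n}. F (\<gamma> (\<tau> j)) \<bullet> (\<gamma> (t j) - \<gamma> (t (j - 1)))) - I\<bar> < \<epsilon>)"

end

theory Submission
  imports Defs
begin

text \<open>
  On each piece [u, v] of a fine partition, df \<circ> \<gamma> stays within e of the tag value c, so
  h = f \<circ> \<gamma> - c \<bullet> \<gamma> satisfies, to the right of every point w, the local bound
  |h w' - h w| \<le> 2e |\<gamma> w' - \<gamma> w| \<le> 2e L(\<gamma>|[w, w']). Since the length is superadditive and h is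
  continuous, a supremum argument turns this into |h v - h u| \<le> 2e L(\<gamma>|[u, v]). Summing over the
  partition, the error of a Riemann--Stieltjes sum against the telescoping sum
  f(\<gamma> b) - f(\<gamma> a) is at most 2e L(\<gamma>), which is small by uniform continuity of df \<circ> \<gamma>.
\<close>

lemma is_partition_mono:
  assumes "is_partition a b n t" "i \<le> k" "k \<le> n"
  shows "t i \<le> t k"
  using assms(2,3)
proof (induction k)
  case (Suc k)
  show ?case
  proof (cases "i = Suc k")
    case False
    then have "t i \<le> t k" using Suc by simp
    also have "t k < t (Suc k)" using assms(1) Suc.prems by (simp add: is_partition_def)
    finally show ?thesis by simp
  qed simp
qed simp

lemma is_partition_range:
  assumes "is_partition a b n t" "i \<le> n"
  shows "t i \<in> {a..b}"
  using is_partition_mono[OF assms(1), of 0 i] is_partition_mono[OF assms(1), of i n] assms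
  by (auto simp: is_partition_def)

lemma is_partition_append:
  assumes "is_partition u s m t1" "is_partition s w n t2"
  shows "is_partition u w (m + n) (\<lambda>i. if i \<le> m then t1 i else t2 (i - m))"
  unfolding is_partition_def
proof (intro conjI allI impI)
  let ?t = "\<lambda>i. if i \<le> m then t1 i else t2 (i - m)"
  show "?t 0 = u" using assms(1) by (simp add: is_partition_def)
  show "?t (m + n) = w"
    using assms by (cases "n = 0") (auto simp: is_partition_def)
  fix j assume j: "j < m + n"
  consider "Suc j \<le> m" | "j = m" | "m < j" by linarith
  then show "?t j < ?t (Suc j)"
  proof cases
    case 1 then show ?thesis using assms(1) by (simp add: is_partition_def)
  next
    case 2 then show ?thesis using assms j by (auto simp: is_partition_def)
  next
    case 3 then show ?thesis using assms(2) j by (auto simp: is_partition_def Suc_diff_le)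
  qed
qed

lemma polygonal_sumsI:
  assumes "is_partition u v n t"
  shows "(\<Sum>j\<in>{1..n}. norm (\<gamma> (t j) - \<gamma> (t (j - 1)))) \<in> polygonal_sums \<gamma> u v"
  unfolding polygonal_sums_def using assms by blast

lemma norm_diff_in_polygonal_sums:
  assumes "u \<le> v"
  shows "norm (\<gamma> v - \<gamma> u) \<in> polygonal_sums \<gamma> u v"
proof (cases "u = v")
  case True
  have "is_partition u v 0 (\<lambda>_. u)" using True by (simp add: is_partition_def)
  from polygonal_sumsI[OF this, of \<gamma>] show ?thesis using True by simp
next
  case False
  then have "is_partition u v 1 (\<lambda>i. if i = 0 then u else v)"
    using assms by (simp add: is_partition_def)
  from polygonal_sumsI[OF this, of \<gamma>] show ?thesis by simp
qed

lemma polygonal_sums_add: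
  assumes "p \<in> polygonal_sums \<gamma> u s" "q \<in> polygonal_sums \<gamma> s w"
  shows "p + q \<in> polygonal_sums \<gamma> u w"
proof -
  obtain m t1 where P1: "is_partition u s m t1"
    and p: "p = (\<Sum>j\<in>{1..m}. norm (\<gamma> (t1 j) - \<gamma> (t1 (j - 1))))"
    using assms(1) unfolding polygonal_sums_def by blast
  obtain n t2 where P2: "is_partition s w n t2"
    and q: "q = (\<Sum>j\<in>{1..n}. norm (\<gamma> (t2 j) - \<gamma> (t2 (j - 1))))"
    using assms(2) unfolding polygonal_sums_def by blast
  define t where "t = (\<lambda>i. if i \<le> m then t1 i else t2 (i - m))"
  let ?g = "\<lambda>j. norm (\<gamma> (t j) - \<gamma> (t (j - 1)))"
  have "(\<Sum>j\<in>{1..m + n}. ?g j) = (\<Sum>j\<in>{1..m}. ?g j) + (\<Sum>j\<in>{m + 1..m + n}. ?g j)"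
    by (rule sum.ub_add_nat) simp
  also have "(\<Sum>j\<in>{1..m}. ?g j) = p"
    unfolding p by (rule sum.cong) (auto simp: t_def)
  also have "(\<Sum>j\<in>{m + 1..m + n}. ?g j) = (\<Sum>i\<in>{1..n}. ?g (i + m))"
    using sum.shift_bounds_cl_nat_ivl[of ?g 1 m n] by (simp add: add.commute)
  also have "\<dots> = q"
    unfolding q
  proof (rule sum.cong)
    fix i assume i: "i \<in> {1..n}"
    have "t (i + m - 1) = t2 (i - 1)"
      using i P1 P2 by (cases "i = 1") (auto simp: t_def is_partition_def)
    then show "?g (i + m) = norm (\<gamma> (t2 i) - \<gamma> (t2 (i - 1)))"
      using i by (simp add: t_def)
  qed simp
  finally show ?thesis
    using polygonal_sumsI[OF is_partition_append[OF P1 P2, folded t_def], of \<gamma>] by simp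
qed

lemma rectifiable_subinterval:
  assumes "rectifiable \<gamma> a b" "a \<le> u" "u \<le> v" "v \<le> b"
  shows "rectifiable \<gamma> u v"
proof -
  obtain B where B: "\<And>x. x \<in> polygonal_sums \<gamma> a b \<Longrightarrow> x \<le> B"
    using assms(1) unfolding rectifiable_def bdd_above_def by blast
  have "x \<le> B" if x: "x \<in> polygonal_sums \<gamma> u v" for x
  proof -
    have "norm (\<gamma> u - \<gamma> a) + x + norm (\<gamma> b - \<gamma> v) \<in> polygonal_sums \<gamma> a b"
      using assms
      by (intro polygonal_sums_add[OF polygonal_sums_add[OF _ x]] norm_diff_in_polygonal_sums)
    from B[OF this] show ?thesis
      using norm_ge_zero[of "\<gamma> u - \<gamma> a"] norm_ge_zero[of "\<gamma> b - \<gamma> v"] by linarith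
  qed
  then show ?thesis unfolding rectifiable_def bdd_above_def by blast
qed

lemma polygonal_sum_le_path_len:
  "rectifiable \<gamma> u v \<Longrightarrow> x \<in> polygonal_sums \<gamma> u v \<Longrightarrow> x \<le> path_len \<gamma> u v"
  unfolding rectifiable_def path_len_def by (rule cSup_upper)

lemma norm_diff_le_path_len:
  "rectifiable \<gamma> u v \<Longrightarrow> u \<le> v \<Longrightarrow> norm (\<gamma> v - \<gamma> u) \<le> path_len \<gamma> u v"
  using polygonal_sum_le_path_len norm_diff_in_polygonal_sums by blast

lemma path_len_nonneg:
  "rectifiable \<gamma> u v \<Longrightarrow> u \<le> v \<Longrightarrow> 0 \<le> path_len \<gamma> u v"
  using norm_diff_le_path_len norm_ge_zero order_trans by blast

lemma path_len_superadditive: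
  assumes "rectifiable \<gamma> u w" "u \<le> s" "s \<le> w"
  shows "path_len \<gamma> u s + path_len \<gamma> s w \<le> path_len \<gamma> u w"
proof -
  have sum_le: "x + y \<le> path_len \<gamma> u w"
    if "x \<in> polygonal_sums \<gamma> u s" "y \<in> polygonal_sums \<gamma> s w" for x y
    using polygonal_sum_le_path_len[OF assms(1) polygonal_sums_add[OF that]] .
  have "path_len \<gamma> u s \<le> path_len \<gamma> u w - y" if y: "y \<in> polygonal_sums \<gamma> s w" for y
    unfolding path_len_def[of \<gamma> u s] using norm_diff_in_polygonal_sums[OF assms(2)]
    by (intro cSup_least) (use sum_le[OF _ y] in \<open>auto simp: algebra_simps\<close>)
  then have "path_len \<gamma> s w \<le> path_len \<gamma> u w - path_len \<gamma> u s"
    unfolding path_len_def[of \<gamma> s w] using norm_diff_in_polygonal_sums[OF assms(3)]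
    by (intro cSup_least) (auto simp: algebra_simps)
  then show ?thesis by simp
qed

lemma sum_path_len_partition_le:
  assumes rect: "rectifiable \<gamma> a b" and P: "is_partition a b n t"
  shows "(\<Sum>j\<in>{1..n}. path_len \<gamma> (t (j - 1)) (t j)) \<le> path_len \<gamma> a b"
proof -
  have rect_sub: "rectifiable \<gamma> (t i) (t k)" if "i \<le> k" "k \<le> n" for i k
    using rectifiable_subinterval[OF rect] is_partition_range[OF P] is_partition_mono[OF P] that
    by (meson atLeastAtMost_iff order_trans)
  have "(\<Sum>j\<in>{1..m}. path_len \<gamma> (t (j - 1)) (t j)) \<le> path_len \<gamma> (t 0) (t m)" if "m \<le> n" for m
    using that
  proof (induction m)
    case 0
    then show ?case using path_len_nonneg[OF rect_sub[of 0 0]] by simp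
  next
    case (Suc m)
    then have "(\<Sum>j\<in>{1..Suc m}. path_len \<gamma> (t (j - 1)) (t j))
        \<le> path_len \<gamma> (t 0) (t m) + path_len \<gamma> (t m) (t (Suc m))" by simp
    also have "\<dots> \<le> path_len \<gamma> (t 0) (t (Suc m))"
      using Suc.prems by (intro path_len_superadditive rect_sub is_partition_mono[OF P]) auto
    finally show ?case .
  qed
  from this[of n] show ?thesis using P by (simp add: is_partition_def)
qed

lemma is_derivative_onD:
  assumes "is_derivative_on f df K" "x \<in> K" "0 < e"
  obtains d where "0 < d"
    "\<And>y. y \<in> K \<Longrightarrow> dist y x < d \<Longrightarrow> \<bar>f y - f x - df x \<bullet> (y - x)\<bar> \<le> e * norm (y - x)"
proof -
  have "((\<lambda>y. (f y - f x - df x \<bullet> (y - x)) / norm (y - x)) \<longlongrightarrow> 0) (at x within (K - {x}))"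
    using assms(1,2) unfolding is_derivative_on_def by blast
  from tendstoD[OF this assms(3)] obtain d where d: "0 < d"
    "\<And>y. y \<in> K - {x} \<Longrightarrow> y \<noteq> x \<Longrightarrow> dist y x < d \<Longrightarrow>
       \<bar>(f y - f x - df x \<bullet> (y - x)) / norm (y - x)\<bar> < e"
    unfolding eventually_at by (auto simp: dist_real_def)
  have "\<bar>f y - f x - df x \<bullet> (y - x)\<bar> \<le> e * norm (y - x)" if "y \<in> K" "dist y x < d" for y
  proof (cases "y = x")
    case False
    then have "\<bar>f y - f x - df x \<bullet> (y - x)\<bar> / norm (y - x) < e"
      using d(2)[of y] that by (simp add: abs_divide)
    then show ?thesis using False by (simp add: pos_divide_less_eq less_imp_le)
  qed simp
  with d(1) show ?thesis by (rule that)
qed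

lemma is_derivative_on_imp_continuous_on:
  assumes "is_derivative_on f df K"
  shows "continuous_on K f"
  unfolding continuous_on_iff
proof (intro ballI allI impI)
  fix x and e :: real
  assume x: "x \<in> K" and e: "0 < e"
  obtain d where d: "0 < d"
    "\<And>y. y \<in> K \<Longrightarrow> dist y x < d \<Longrightarrow> \<bar>f y - f x - df x \<bullet> (y - x)\<bar> \<le> 1 * norm (y - x)"
    using is_derivative_onD[OF assms x zero_less_one] by blast
  define M where "M = norm (df x) + 1"
  have M: "0 < M" by (simp add: M_def add_nonneg_pos)
  show "\<exists>d>0. \<forall>y\<in>K. dist y x < d \<longrightarrow> dist (f y) (f x) < e"
  proof (intro exI[of _ "min d (e / M)"] conjI ballI impI)
    show "0 < min d (e / M)" using d(1) e M by simp
    fix y assume y: "y \<in> K" "dist y x < min d (e / M)"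
    have "\<bar>f y - f x\<bar> \<le> \<bar>df x \<bullet> (y - x)\<bar> + norm (y - x)"
      using d(2)[OF y(1)] y(2) by simp
    also have "\<dots> \<le> M * norm (y - x)"
      using Cauchy_Schwarz_ineq2[of "df x" "y - x"] by (simp add: M_def algebra_simps)
    also have "\<dots> < M * (e / M)"
      using y(2) M by (intro mult_strict_left_mono) (auto simp: dist_norm)
    finally show "dist (f y) (f x) < e" using M by (simp add: dist_real_def)
  qed
qed

lemma increment_le_superadditive_bound:
  fixes h :: "real \<Rightarrow> real" and V :: "real \<Rightarrow> real \<Rightarrow> real"
  assumes "u \<le> v" and h: "continuous_on {u..v} h" and C: "0 \<le> C"
    and V_add: "\<And>x y z. u \<le> x \<Longrightarrow> x \<le> y \<Longrightarrow> y \<le> z \<Longrightarrow> z \<le> v \<Longrightarrow> V x y + V y z \<le> V x z"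
    and V_nonneg: "\<And>x y. u \<le> x \<Longrightarrow> x \<le> y \<Longrightarrow> y \<le> v \<Longrightarrow> 0 \<le> V x y"
    and local_bound: "\<And>w. u \<le> w \<Longrightarrow> w < v \<Longrightarrow>
       \<exists>\<rho>>0. \<forall>w'. w < w' \<and> w' < w + \<rho> \<and> w' \<le> v \<longrightarrow> \<bar>h w' - h w\<bar> \<le> C * V w w'"
  shows "\<bar>h v - h u\<bar> \<le> C * V u v"
proof -
  define S where "S = {w \<in> {u..v}. \<bar>h w - h u\<bar> \<le> C * V u w}"
  have uS: "u \<in> S" unfolding S_def using \<open>u \<le> v\<close> V_nonneg[of u u] C by auto
  have bdd: "bdd_above S" unfolding S_def bdd_above_def by auto
  define s where "s = Sup S"
  have us: "u \<le> s" unfolding s_def using uS bdd by (rule cSup_upper)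
  have sv: "s \<le> v" unfolding s_def using uS by (intro cSup_least) (auto simp: S_def)
  \<comment> \<open>S is closed under the supremum: it lies in the closed set where |h w - h u| \<le> C V(u, s).\<close>
  define T where "T = {u..v} \<inter> (\<lambda>w. \<bar>h w - h u\<bar>) -` {..C * V u s}"
  have "closed T" unfolding T_def
    by (rule continuous_closed_preimage) (auto intro!: continuous_intros h)
  moreover have "S \<subseteq> T"
  proof
    fix w assume w: "w \<in> S"
    then have "w \<le> s" unfolding s_def using bdd by (rule cSup_upper)
    then have "V u w \<le> V u s" using V_add[of u w s] V_nonneg[of w s] w sv by (auto simp: S_def)
    then have "C * V u w \<le> C * V u s" using C by (rule mult_left_mono)
    then show "w \<in> T" using w by (auto simp: S_def T_def)
  qed
  moreover have "s \<in> closure S" unfolding s_def using uS bdd by (intro closure_contains_Sup) auto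
  ultimately have "s \<in> T" using closure_minimal by blast
  then have sS: "s \<in> S" using us sv by (auto simp: S_def T_def)
  show ?thesis
  proof (cases "s = v")
    case True then show ?thesis using sS by (simp add: S_def)
  next
    case False
    then have "s < v" using sv by simp
    then obtain \<rho> where \<rho>: "0 < \<rho>"
      "\<And>w'. s < w' \<Longrightarrow> w' < s + \<rho> \<Longrightarrow> w' \<le> v \<Longrightarrow> \<bar>h w' - h s\<bar> \<le> C * V s w'"
      using local_bound[OF us] by blast
    define w' where "w' = min v (s + \<rho> / 2)"
    have w': "s < w'" "w' < s + \<rho>" "w' \<le> v" using \<rho>(1) \<open>s < v\<close> by (auto simp: w'_def)
    have "\<bar>h w' - h u\<bar> \<le> \<bar>h s - h u\<bar> + \<bar>h w' - h s\<bar>" by simp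
    also have "\<dots> \<le> C * V u s + C * V s w'" using sS \<rho>(2)[OF w'] by (auto simp: S_def)
    also have "\<dots> \<le> C * V u w'" using V_add[of u s w'] us w' C
      by (simp add: distrib_left[symmetric] mult_left_mono)
    finally have "w' \<in> S" using us w' by (auto simp: S_def)
    then have "w' \<le> s" unfolding s_def using bdd by (rule cSup_upper)
    then show ?thesis using w' by simp
  qed
qed

lemma path_linearization_error_local:
  fixes f :: "'a::euclidean_space \<Rightarrow> real" and \<gamma> :: "real \<Rightarrow> 'a"
  assumes der: "is_derivative_on f df K"
    and \<gamma>: "continuous_on S \<gamma>" "\<gamma> ` S \<subseteq> K" and "w \<in> S"
    and "0 < e" and close: "norm (df (\<gamma> w) - c) \<le> e"
  obtains \<rho> where "0 < \<rho>" "\<And>w'. w' \<in> S \<Longrightarrow> dist w' w < \<rho> \<Longrightarrow>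
    \<bar>f (\<gamma> w') - f (\<gamma> w) - c \<bullet> (\<gamma> w' - \<gamma> w)\<bar> \<le> 2 * e * norm (\<gamma> w' - \<gamma> w)"
proof -
  have "\<gamma> w \<in> K" using \<open>w \<in> S\<close> \<gamma>(2) by auto
  then obtain d where d: "0 < d" "\<And>y. y \<in> K \<Longrightarrow> dist y (\<gamma> w) < d \<Longrightarrow>
      \<bar>f y - f (\<gamma> w) - df (\<gamma> w) \<bullet> (y - \<gamma> w)\<bar> \<le> e * norm (y - \<gamma> w)"
    using is_derivative_onD[OF der _ \<open>0 < e\<close>] by blast
  obtain \<rho> where \<rho>: "0 < \<rho>" "\<And>w'. w' \<in> S \<Longrightarrow> dist w' w < \<rho> \<Longrightarrow> dist (\<gamma> w') (\<gamma> w) < d"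
    using \<gamma>(1) \<open>w \<in> S\<close> d(1) unfolding continuous_on_iff by blast
  have "\<bar>f (\<gamma> w') - f (\<gamma> w) - c \<bullet> (\<gamma> w' - \<gamma> w)\<bar> \<le> 2 * e * norm (\<gamma> w' - \<gamma> w)"
    if w': "w' \<in> S" "dist w' w < \<rho>" for w'
  proof -
    let ?D = "\<gamma> w' - \<gamma> w"
    have "f (\<gamma> w') - f (\<gamma> w) - c \<bullet> ?D = (f (\<gamma> w') - f (\<gamma> w) - df (\<gamma> w) \<bullet> ?D) + (df (\<gamma> w) - c) \<bullet> ?D"
      by (simp add: inner_diff_left)
    moreover have "\<bar>f (\<gamma> w') - f (\<gamma> w) - df (\<gamma> w) \<bullet> ?D\<bar> \<le> e * norm ?D"
      using w' \<gamma>(2) by (intro d(2) \<rho>(2)) auto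
    moreover have "\<bar>(df (\<gamma> w) - c) \<bullet> ?D\<bar> \<le> e * norm ?D"
      using Cauchy_Schwarz_ineq2[of "df (\<gamma> w) - c" ?D] mult_right_mono[OF close norm_ge_zero[of ?D]]
      by linarith
    ultimately show ?thesis by linarith
  qed
  with \<rho>(1) show ?thesis by (rule that)
qed

lemma path_increment_linearization_error:
  fixes f :: "'a::euclidean_space \<Rightarrow> real" and \<gamma> :: "real \<Rightarrow> 'a"
  assumes der: "is_derivative_on f df K" and "u \<le> v"
    and \<gamma>: "continuous_on {u..v} \<gamma>" "\<gamma> ` {u..v} \<subseteq> K" and rect: "rectifiable \<gamma> u v"
    and "0 < e" and close: "\<And>w. w \<in> {u..v} \<Longrightarrow> norm (df (\<gamma> w) - c) \<le> e"
  shows "\<bar>f (\<gamma> v) - f (\<gamma> u) - c \<bullet> (\<gamma> v - \<gamma> u)\<bar> \<le> 2 * e * path_len \<gamma> u v"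
proof -
  define h where "h w = f (\<gamma> w) - c \<bullet> \<gamma> w" for w
  have h_diff: "h w' - h w = f (\<gamma> w') - f (\<gamma> w) - c \<bullet> (\<gamma> w' - \<gamma> w)" for w w'
    by (simp add: h_def inner_diff_right)
  have "continuous_on {u..v} (f \<circ> \<gamma>)"
    using continuous_on_compose[OF \<gamma>(1)]
      continuous_on_subset[OF is_derivative_on_imp_continuous_on[OF der] \<gamma>(2)] by blast
  then have "continuous_on {u..v} h"
    unfolding h_def using \<gamma>(1) by (auto intro!: continuous_intros)
  have rect_sub: "rectifiable \<gamma> x y" if "u \<le> x" "x \<le> y" "y \<le> v" for x y
    using rectifiable_subinterval[OF rect that] .
  have "\<bar>h v - h u\<bar> \<le> (2 * e) * path_len \<gamma> u v"
  proof (rule increment_le_superadditive_bound[OF \<open>u \<le> v\<close> \<open>continuous_on {u..v} h\<close>])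
    show "0 \<le> 2 * e" using \<open>0 < e\<close> by simp
    show "path_len \<gamma> x y + path_len \<gamma> y z \<le> path_len \<gamma> x z"
      if "u \<le> x" "x \<le> y" "y \<le> z" "z \<le> v" for x y z
      using that by (intro path_len_superadditive rect_sub) auto
    show "0 \<le> path_len \<gamma> x y" if "u \<le> x" "x \<le> y" "y \<le> v" for x y
      using that by (intro path_len_nonneg rect_sub)
    fix w assume w: "u \<le> w" "w < v"
    have "w \<in> {u..v}" using w by simp
    from path_linearization_error_local[OF der \<gamma> this \<open>0 < e\<close> close[OF this]]
    obtain \<rho> where "0 < \<rho>" and \<rho>: "\<And>w'. w' \<in> {u..v} \<Longrightarrow> dist w' w < \<rho> \<Longrightarrow>
        \<bar>h w' - h w\<bar> \<le> 2 * e * norm (\<gamma> w' - \<gamma> w)"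
      unfolding h_diff by blast
    have "\<bar>h w' - h w\<bar> \<le> 2 * e * path_len \<gamma> w w'" if w': "w < w'" "w' < w + \<rho>" "w' \<le> v" for w'
    proof -
      have "\<bar>h w' - h w\<bar> \<le> 2 * e * norm (\<gamma> w' - \<gamma> w)"
        using w w' by (intro \<rho>) (auto simp: dist_real_def)
      also have "\<dots> \<le> 2 * e * path_len \<gamma> w w'"
        using norm_diff_le_path_len[OF rect_sub] w w' \<open>0 < e\<close> by (intro mult_left_mono) auto
      finally show ?thesis .
    qed
    with \<open>0 < \<rho>\<close> show "\<exists>\<rho>>0. \<forall>w'. w < w' \<and> w' < w + \<rho> \<and> w' \<le> v \<longrightarrow>
        \<bar>h w' - h w\<bar> \<le> 2 * e * path_len \<gamma> w w'" by blast
  qed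
  then show ?thesis by (simp only: h_diff)
qed

lemma Riemann_Stieltjes_sum_error_le:
  fixes f :: "'a::euclidean_space \<Rightarrow> real" and \<gamma> :: "real \<Rightarrow> 'a"
  assumes der: "is_derivative_on f df K"
    and \<gamma>: "continuous_on {a..b} \<gamma>" "\<gamma> ` {a..b} \<subseteq> K" and rect: "rectifiable \<gamma> a b"
    and P: "is_partition a b n t" and "0 < e"
    and close: "\<And>j w. j \<in> {1..n} \<Longrightarrow> w \<in> {t (j - 1)..t j} \<Longrightarrow> norm (df (\<gamma> w) - df (\<gamma> (\<tau> j))) \<le> e"
  shows "\<bar>(\<Sum>j\<in>{1..n}. df (\<gamma> (\<tau> j)) \<bullet> (\<gamma> (t j) - \<gamma> (t (j - 1)))) - (f (\<gamma> b) - f (\<gamma> a))\<bar>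
    \<le> 2 * e * path_len \<gamma> a b"
proof -
  let ?err = "\<lambda>j. f (\<gamma> (t j)) - f (\<gamma> (t (j - 1))) - df (\<gamma> (\<tau> j)) \<bullet> (\<gamma> (t j) - \<gamma> (t (j - 1)))"
  have "(\<Sum>j\<in>{1..m}. f (\<gamma> (t j)) - f (\<gamma> (t (j - 1)))) = f (\<gamma> (t m)) - f (\<gamma> (t 0))" for m
    by (induction m) auto
  then have "\<bar>(\<Sum>j\<in>{1..n}. df (\<gamma> (\<tau> j)) \<bullet> (\<gamma> (t j) - \<gamma> (t (j - 1)))) - (f (\<gamma> b) - f (\<gamma> a))\<bar>
      = \<bar>\<Sum>j\<in>{1..n}. ?err j\<bar>"
    using P by (simp add: is_partition_def sum_subtractf abs_minus_commute)
  also have "\<dots> \<le> (\<Sum>j\<in>{1..n}. 2 * e * path_len \<gamma> (t (j - 1)) (t j))"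
  proof (rule order_trans[OF sum_abs sum_mono])
    fix j assume j: "j \<in> {1..n}"
    have "t (j - 1) \<in> {a..b}" "t j \<in> {a..b}" "t (j - 1) \<le> t j"
      using j is_partition_range[OF P] is_partition_mono[OF P] by auto
    then show "\<bar>?err j\<bar> \<le> 2 * e * path_len \<gamma> (t (j - 1)) (t j)"
      using j \<open>0 < e\<close> close[OF j]
      by (intro path_increment_linearization_error[OF der] rectifiable_subinterval[OF rect]
          continuous_on_subset[OF \<gamma>(1)] order_trans[OF _ \<gamma>(2)] image_mono) auto
  qed
  also have "\<dots> \<le> 2 * e * path_len \<gamma> a b"
    using sum_path_len_partition_le[OF rect P] \<open>0 < e\<close> by (simp add: sum_distrib_left[symmetric])
  finally show ?thesis .
qed

lemma partition_oscillation_le: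
  fixes g :: "real \<Rightarrow> 'b::real_normed_vector"
  assumes "\<And>x x'. x \<in> {a..b} \<Longrightarrow> x' \<in> {a..b} \<Longrightarrow> dist x' x < \<delta> \<Longrightarrow> dist (g x') (g x) < e"
    and P: "is_partition a b n t" and mesh: "\<forall>j\<in>{1..n}. t j - t (j - 1) < \<delta>"
    and tags: "\<forall>j\<in>{1..n}. t (j - 1) \<le> \<tau> j \<and> \<tau> j \<le> t j"
    and j: "j \<in> {1..n}" and w: "w \<in> {t (j - 1)..t j}"
  shows "norm (g w - g (\<tau> j)) \<le> e"
proof -
  have "t (j - 1) \<in> {a..b}" "t j \<in> {a..b}" using is_partition_range[OF P] j by auto
  moreover have "t (j - 1) \<le> \<tau> j" "\<tau> j \<le> t j" "t j - t (j - 1) < \<delta>" using mesh tags j by auto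
  ultimately have "dist (g w) (g (\<tau> j)) < e"
    using w by (intro assms(1)) (auto simp: dist_real_def)
  then show ?thesis by (simp add: dist_norm)
qed

theorem mainTheorem2:
  fixes K :: "'a::euclidean_space set" and f :: "'a \<Rightarrow> real" and df :: "'a \<Rightarrow> 'a"
    and \<gamma> :: "real \<Rightarrow> 'a" and a b :: real
  assumes "compact K"
    and "is_derivative_on f df K" and "continuous_on K df"
    and "a \<le> b" and "continuous_on {a..b} \<gamma>" and "\<gamma> ` {a..b} \<subseteq> K"
    and "rectifiable \<gamma> a b"
  shows "has_RS_path_integral df \<gamma> a b (f (\<gamma> b) - f (\<gamma> a))"
  unfolding has_RS_path_integral_def
proof (intro allI impI)
  fix \<epsilon> :: real assume "0 < \<epsilon>"
  define L where "L = path_len \<gamma> a b"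
  have "0 \<le> L" unfolding L_def using path_len_nonneg assms(4,7) by blast
  define e where "e = \<epsilon> / (4 * (L + 1))"
  have "0 < e" "2 * e * L < \<epsilon>"
    using \<open>0 < \<epsilon>\<close> \<open>0 \<le> L\<close> by (auto simp: e_def field_simps intro!: add_pos_nonneg)
  have "uniformly_continuous_on {a..b} (df \<circ> \<gamma>)"
    using assms(3,5,6) by (intro compact_uniformly_continuous continuous_on_compose)
      (auto intro: continuous_on_subset)
  then obtain \<delta> where "0 < \<delta>"
    and \<delta>: "\<And>x x'. x \<in> {a..b} \<Longrightarrow> x' \<in> {a..b} \<Longrightarrow> dist x' x < \<delta> \<Longrightarrow> dist ((df \<circ> \<gamma>) x') ((df \<circ> \<gamma>) x) < e"
    using \<open>0 < e\<close> unfolding uniformly_continuous_on_def by blast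
  show "\<exists>\<delta>>0. \<forall>n t \<tau>. is_partition a b n t \<and> (\<forall>j\<in>{1..n}. t j - t (j - 1) < \<delta>) \<and>
      (\<forall>j\<in>{1..n}. t (j - 1) \<le> \<tau> j \<and> \<tau> j \<le> t j) \<longrightarrow>
      \<bar>(\<Sum>j\<in>{1..n}. df (\<gamma> (\<tau> j)) \<bullet> (\<gamma> (t j) - \<gamma> (t (j - 1)))) - (f (\<gamma> b) - f (\<gamma> a))\<bar> < \<epsilon>"
  proof (intro exI[of _ \<delta>] conjI allI impI \<open>0 < \<delta>\<close>, elim conjE)
    fix n t \<tau>
    assume P: "is_partition a b n t" and mesh: "\<forall>j\<in>{1..n}. t j - t (j - 1) < \<delta>"
      and tags: "\<forall>j\<in>{1..n}. t (j - 1) \<le> \<tau> j \<and> \<tau> j \<le> t j"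
    have close: "norm (df (\<gamma> w) - df (\<gamma> (\<tau> j))) \<le> e"
      if "j \<in> {1..n}" "w \<in> {t (j - 1)..t j}" for j w
      using partition_oscillation_le[OF \<delta> P mesh tags that] by simp
    have "\<bar>(\<Sum>j\<in>{1..n}. df (\<gamma> (\<tau> j)) \<bullet> (\<gamma> (t j) - \<gamma> (t (j - 1)))) - (f (\<gamma> b) - f (\<gamma> a))\<bar>
        \<le> 2 * e * L"
      unfolding L_def by (rule Riemann_Stieltjes_sum_error_le[OF assms(2,5,6,7) P \<open>0 < e\<close> close])
    then show "\<bar>(\<Sum>j\<in>{1..n}. df (\<gamma> (\<tau> j)) \<bullet> (\<gamma> (t j) - \<gamma> (t (j - 1)))) - (f (\<gamma> b) - f (\<gamma> a))\<bar> < \<epsilon>"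
      using \<open>2 * e * L < \<epsilon>\<close> by linarith
  qed
qed

end
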